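(* Let $\mathcal{C}\le \mathbb{F}_q^n$ be a linear code with one-variable weight enumerator $W_\mathcal{C}(x)$ and homogeneous weight enumerator $W_\mathcal{C}(x,y)$. Then the stabilizer $\mathrm{Stab}_{\mathrm{GL}_2(\mathbb{C})}(W_\mathcal{C}(x,y))$ is finite if and only if $W_\mathcal{C}(x)$ has at least $3$ distinct roots in $\overline{\mathbb{Z}}$ (the algebraic integers; equivalently, at least $3$ distinct complex roots, since $W_\mathcal{C}(x)$ is a monic integer polynomial).
   Context: A linear code is a subspace $\mathcal{C}\le\mathbb{F}_q^n$; the weight $\mathrm{wt}(c)$ of $c\in\mathcal{C}$ is the number of nonzero coordinates. The one-variable weight enumerator is $W_\mathcal{C}(x)=\sum_{c\in\mathcal{C}}x^{n-\mathrm{wt}(c)}$ and the homogeneous weight enumerator is $W_\mathcal{C}(x,y)=\sum_{c\in\mathcal{C}}x^{n-\mathrm{wt}(c)}y^{\mathrm{wt}(c)}$. The group $\mathrm{GL}_2(\mathbb{C})$ acts on $\mathbb{C}[x,y]$ by $A\cdot p(x,y)=p(ax+by,cx+dy)$ for $A=\begin{pmatrix}a&b\\c&d\end{pmatrix}$, and $\mathrm{Stab}_{\mathrm{GL}_2(\mathbb{C})}(p)=\{A: A\cdot p=p\}$. *)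

theory Defs
  imports "HOL-Analysis.Analysis" "HOL-Computational_Algebra.Polynomial"
begin

text \<open>Words of length n over a field are modelled as functions nat => 'a vanishing
  outside {..<n}. A linear code is a subspace of this space F^n.\<close>

definition is_linear_code :: "nat \<Rightarrow> (nat \<Rightarrow> 'a::field) set \<Rightarrow> bool" where
  "is_linear_code n C \<longleftrightarrow>
     C \<subseteq> {v. \<forall>i\<ge>n. v i = 0} \<and> (\<lambda>_. 0) \<in> C \<and>
     (\<forall>u\<in>C. \<forall>v\<in>C. (\<lambda>i. u i + v i) \<in> C) \<and>
     (\<forall>a. \<forall>v\<in>C. (\<lambda>i. a * v i) \<in> C)"

definition wt :: "nat \<Rightarrow> (nat \<Rightarrow> 'a::zero) \<Rightarrow> nat" where
  "wt n v = card {i\<in>{..<n}. v i \<noteq> 0}"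

definition wenum1 :: "nat \<Rightarrow> (nat \<Rightarrow> 'a::zero) set \<Rightarrow> int poly" where
  "wenum1 n C = (\<Sum>c\<in>C. monom 1 (n - wt n c))"

text \<open>Homogeneous weight enumerator W_C(x,y), as a polynomial function on C^2 (v$1 = x, v$2 = y).\<close>
definition wenum2 :: "nat \<Rightarrow> (nat \<Rightarrow> 'a::zero) set \<Rightarrow> complex^2 \<Rightarrow> complex" where
  "wenum2 n C v = (\<Sum>c\<in>C. (v$1) ^ (n - wt n c) * (v$2) ^ (wt n c))"

text \<open>Stabilizer in GL_2(C) of a function p on C^2 under (A . p)(x,y) = p(ax+by, cx+dy),
  i.e. (A . p)(v) = p(A *v v).  Equality of polynomials over C equals equality of functions.\<close>
definition stab_GL2 :: "(complex^2 \<Rightarrow> complex) \<Rightarrow> (complex^2^2) set" where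
  "stab_GL2 p = {A. invertible A \<and> (\<lambda>v. p (A *v v)) = p}"

end

theory Submission
  imports Defs "HOL-Computational_Algebra.Fundamental_Theorem_Algebra"
begin

text \<open>
  The homogeneous weight enumerator is the homogenization of the monic degree-n polynomial
  W(x), so it factors as the product of (x - z y)^(m z) over the distinct roots z of W.
  A matrix A in the stabilizer permutes these linear factors up to scalars, so its Moebius
  transformation permutes the roots. If there are three distinct roots, the Moebius
  transformation is one of finitely many maps on the roots and determines A up to a scalar
  mu with mu^n = 1; hence the stabilizer is finite. If there are at most two roots, then
  W(x,y) = (x - z1 y)^a (x - z2 y)^b, and every linear map scaling the two linear forms
  by t and s with t^a s^b = 1 stabilizes it, giving infinitely many elements.
\<close>

section \<open>Homogenization of univariate polynomials\<close>

definition homogenize :: "nat \<Rightarrow> 'a::comm_semiring_1 poly \<Rightarrow> 'a \<Rightarrow> 'a \<Rightarrow> 'a" where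
  "homogenize n p x y = (\<Sum>k\<le>n. coeff p k * x ^ k * y ^ (n - k))"

lemma homogenize_scale:
  "homogenize n p (m * x) (m * y) = m ^ n * homogenize n p x y"
proof -
  have "(m * x) ^ k * (m * y) ^ (n - k) = m ^ n * (x ^ k * y ^ (n - k))" if "k \<le> n" for k
  proof -
    have split: "m ^ k * m ^ (n - k) = m ^ n" using that by (simp flip: power_add)
    show ?thesis by (simp add: power_mult_distrib mult_ac flip: split)
  qed
  then show ?thesis
    unfolding homogenize_def sum_distrib_left by (intro sum.cong) (simp_all add: algebra_simps)
qed

lemma homogenize_at_y_0: "homogenize n p x 0 = coeff p n * x ^ n"
  unfolding homogenize_def by (simp add: power_0_left if_distrib sum.delta' cong: if_cong)

lemma homogenize_eq_poly:
  fixes p :: "'a::field poly"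
  assumes "degree p \<le> n" "y \<noteq> 0"
  shows "homogenize n p x y = y ^ n * poly p (x / y)"
proof -
  have "poly p (x / y) = (\<Sum>k\<le>n. coeff p k * (x / y) ^ k)"
    unfolding poly_altdef using assms(1)
    by (intro sum.mono_neutral_left) (auto simp: coeff_eq_0)
  moreover have "y ^ n * (x / y) ^ k = x ^ k * y ^ (n - k)" if "k \<le> n" for k
    using that assms(2) by (simp add: power_divide field_simps flip: power_add)
  ultimately show ?thesis
    unfolding homogenize_def by (simp add: sum_distrib_left mult.left_commute mult.assoc)
qed

lemma homogenize_sum:
  "homogenize n (\<Sum>a\<in>A. f a) x y = (\<Sum>a\<in>A. homogenize n (f a) x y)"
  unfolding homogenize_def coeff_sum sum_distrib_right by (rule sum.swap)

lemma homogenize_monom: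
  assumes "k \<le> n" shows "homogenize n (monom 1 k) x y = x ^ k * y ^ (n - k)"
proof -
  have "homogenize n (monom 1 k) x y = (\<Sum>j\<le>n. if j = k then x ^ j * y ^ (n - j) else 0)"
    unfolding homogenize_def by (intro sum.cong) (auto simp: coeff_monom)
  then show ?thesis using assms by (simp add: sum.delta')
qed

lemma poly_eq_two_root_powers:
  fixes p :: "complex poly"
  assumes "p \<noteq> 0" "{z. poly p z = 0} \<subseteq> {z1, z2}" "z1 \<noteq> z2"
  shows "p = smult (lead_coeff p) ([:-z1, 1:] ^ order z1 p * [:-z2, 1:] ^ order z2 p)"
proof -
  have "(\<Prod>z | poly p z = 0. [:-z, 1:] ^ order z p) = (\<Prod>z\<in>{z1, z2}. [:-z, 1:] ^ order z p)"
    using assms by (intro prod.mono_neutral_left) (auto simp: order_0I)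
  then show ?thesis
    using complex_poly_decompose[of p] assms(3) by simp
qed

lemma homogenize_two_root_powers:
  fixes p :: "complex poly"
  assumes "degree p = n" "lead_coeff p = 1" "{z. poly p z = 0} \<subseteq> {z1, z2}" "z1 \<noteq> z2"
  shows "homogenize n p x y = (x - z1 * y) ^ order z1 p * (x - z2 * y) ^ order z2 p"
proof -
  define a b where "a = order z1 p" and "b = order z2 p"
  have p: "p = [:-z1, 1:] ^ a * [:-z2, 1:] ^ b"
    using poly_eq_two_root_powers[of p z1 z2] assms unfolding a_def b_def by fastforce
  have "degree p = a + b"
    by (subst p, subst degree_mult_eq) (simp_all add: degree_linear_power)
  then have n: "a + b = n" using assms(1) by simp
  show "homogenize n p x y = (x - z1 * y) ^ a * (x - z2 * y) ^ b"
  proof (cases "y = 0")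
    case True
    then show ?thesis using assms by (simp add: homogenize_at_y_0 flip: n power_add)
  next
    case False
    have "homogenize n p x y = (y * (x / y - z1)) ^ a * (y * (x / y - z2)) ^ b"
      using homogenize_eq_poly[of p n y x] assms(1) False
      by (simp add: p power_mult_distrib flip: n power_add)
    moreover have "y * (x / y - z1) = x - z1 * y" "y * (x / y - z2) = x - z2 * y"
      using False by (simp_all add: field_simps)
    ultimately show ?thesis by simp
  qed
qed

section \<open>The stabilizer of a binary form\<close>

definition mat2 :: "'a::zero \<Rightarrow> 'a \<Rightarrow> 'a \<Rightarrow> 'a \<Rightarrow> 'a^2^2" where
  "mat2 a b c d = vector [vector [a, b], vector [c, d]]"

lemma mat2_nth [simp]:
  "mat2 a b c d $ 1 $ 1 = a" "mat2 a b c d $ 1 $ 2 = b"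
  "mat2 a b c d $ 2 $ 1 = c" "mat2 a b c d $ 2 $ 2 = d"
  unfolding mat2_def by simp_all

lemma mat2_eq_iff:
  "(A::'a^2^2) = B \<longleftrightarrow> A$1$1 = B$1$1 \<and> A$1$2 = B$1$2 \<and> A$2$1 = B$2$1 \<and> A$2$2 = B$2$2"
  by (auto simp: vec_eq_iff forall_2)

lemma scalar_mat_mult_nth: "(mat c ** B) $ i $ j = c * B $ i $ j"
proof -
  have "(\<Sum>k\<in>UNIV. (if i = k then c else 0) * B $ k $ j) = (\<Sum>k\<in>UNIV. if k = i then c * B $ k $ j else 0)"
    by (intro sum.cong) auto
  then show ?thesis by (simp add: matrix_matrix_mult_def mat_def)
qed

lemma matrix_vector_mult_2:
  fixes A :: "'a::comm_semiring_1^2^2"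
  shows "(A *v v) $ 1 = A$1$1 * v$1 + A$1$2 * v$2" "(A *v v) $ 2 = A$2$1 * v$1 + A$2$2 * v$2"
  by (simp_all add: matrix_vector_mult_def sum_2)

lemma stab_GL2_iff:
  "A \<in> stab_GL2 (\<lambda>v. P (v$1) (v$2)) \<longleftrightarrow>
     A$1$1 * A$2$2 - A$1$2 * A$2$1 \<noteq> 0 \<and>
     (\<forall>x y. P (A$1$1 * x + A$1$2 * y) (A$2$1 * x + A$2$2 * y) = P x y)"
proof -
  have "(\<lambda>v. P ((A *v v)$1) ((A *v v)$2)) = (\<lambda>v. P (v$1) (v$2)) \<longleftrightarrow>
        (\<forall>x y. P (A$1$1 * x + A$1$2 * y) (A$2$1 * x + A$2$2 * y) = P x y)"
  proof
    assume "(\<lambda>v. P ((A *v v)$1) ((A *v v)$2)) = (\<lambda>v. P (v$1) (v$2))"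
    from fun_cong[OF this, of "vector [x, y]" for x y]
    show "\<forall>x y. P (A$1$1 * x + A$1$2 * y) (A$2$1 * x + A$2$2 * y) = P x y"
      by (simp add: matrix_vector_mult_2)
  qed (simp add: matrix_vector_mult_2)
  then show ?thesis
    unfolding stab_GL2_def by (simp add: invertible_det_nz det_2)
qed

lemma quadratic_eq_0_at_three_points:
  fixes a b c :: "'a::idom"
  assumes "distinct [z1, z2, z3]" "\<And>z. z \<in> {z1, z2, z3} \<Longrightarrow> a * z^2 + b * z + c = 0"
  shows "a = 0" "b = 0" "c = 0"
proof -
  have roots: "{z1, z2, z3} \<subseteq> {z. poly [:c, b, a:] z = 0}"
    using assms(2) by (force simp: algebra_simps power2_eq_square)
  have "[:c, b, a:] = 0"
  proof (rule ccontr)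
    assume nz: "[:c, b, a:] \<noteq> 0"
    have "3 = card {z1, z2, z3}" using assms(1) by simp
    also have "\<dots> \<le> card {z. poly [:c, b, a:] z = 0}"
      using roots poly_roots_finite[OF nz] by (rule card_mono[rotated])
    also have "\<dots> \<le> degree [:c, b, a:]" using nz by (rule card_poly_roots_bound)
    also have "\<dots> \<le> 2" by simp
    finally show False by simp
  qed
  then show "a = 0" "b = 0" "c = 0" by simp_all
qed

definition moebius_map :: "complex^2^2 \<Rightarrow> complex \<Rightarrow> complex" where
  "moebius_map A z = (A$1$1 * z + A$1$2) / (A$2$1 * z + A$2$2)"

lemma stab_homogenize_maps_root:
  fixes p :: "complex poly"
  assumes p: "degree p = n" "lead_coeff p = 1"
    and A: "A \<in> stab_GL2 (\<lambda>v. homogenize n p (v$1) (v$2))" and z: "poly p z = 0"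
  shows "A$2$1 * z + A$2$2 \<noteq> 0" "poly p (moebius_map A z) = 0"
proof -
  have det: "A$1$1 * A$2$2 - A$1$2 * A$2$1 \<noteq> 0"
    and inv: "\<And>x y. homogenize n p (A$1$1 * x + A$1$2 * y) (A$2$1 * x + A$2$2 * y) = homogenize n p x y"
    using A unfolding stab_GL2_iff by auto
  have "homogenize n p (A$1$1 * z + A$1$2) (A$2$1 * z + A$2$2) = homogenize n p z 1"
    using inv[of z 1] by simp
  also have "homogenize n p z 1 = 0"
    using z p by (simp add: homogenize_eq_poly)
  finally have image_zero: "homogenize n p (A$1$1 * z + A$1$2) (A$2$1 * z + A$2$2) = 0" .
  show denom: "A$2$1 * z + A$2$2 \<noteq> 0"
  proof
    assume denom0: "A$2$1 * z + A$2$2 = 0"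
    then have "A$1$1 * z + A$1$2 = 0"
      using image_zero p by (simp add: homogenize_at_y_0)
    moreover have "A$1$1 * A$2$2 - A$1$2 * A$2$1 =
        A$1$1 * (A$2$1 * z + A$2$2) - A$2$1 * (A$1$1 * z + A$1$2)"
      by (simp add: algebra_simps)
    ultimately show False using denom0 det by simp
  qed
  show "poly p (moebius_map A z) = 0"
    using image_zero denom p by (simp add: homogenize_eq_poly moebius_map_def)
qed

text \<open>The hypothesis says moebius_map A z = moebius_map B z with denominators cleared; it is a
  quadratic equation in z, so holding at three points it holds identically.\<close>
lemma eq_scalar_mult_if_cross_eq:
  fixes A B :: "'a::field^2^2"
  assumes detB: "B$1$1 * B$2$2 - B$1$2 * B$2$1 \<noteq> 0" and z: "distinct [z1, z2, z3]"
    and cross: "\<And>z. z \<in> {z1, z2, z3} \<Longrightarrow>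
      (A$1$1 * z + A$1$2) * (B$2$1 * z + B$2$2) = (A$2$1 * z + A$2$2) * (B$1$1 * z + B$1$2)"
  shows "\<exists>\<mu>. A = mat \<mu> ** B"
proof -
  define c2 c1 c0 where
    "c2 = A$1$1 * B$2$1 - A$2$1 * B$1$1" and
    "c1 = A$1$1 * B$2$2 + A$1$2 * B$2$1 - A$2$1 * B$1$2 - A$2$2 * B$1$1" and
    "c0 = A$1$2 * B$2$2 - A$2$2 * B$1$2"
  have "c2 * z^2 + c1 * z + c0 = 0" if "z \<in> {z1, z2, z3}" for z
    using cross[OF that] unfolding c2_def c1_def c0_def by (simp add: algebra_simps power2_eq_square)
  note c_eq_0 = quadratic_eq_0_at_three_points[OF z this]
  define D m where "D = B$1$1 * B$2$2 - B$1$2 * B$2$1" and "m = A$1$1 * B$2$2 - A$2$1 * B$1$2"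
  have "D * A$1$1 = m * B$1$1 - B$1$2 * c2" "D * A$1$2 = m * B$1$2 + B$1$1 * c0 - B$1$2 * c1"
       "D * A$2$1 = m * B$2$1 - B$2$2 * c2" "D * A$2$2 = m * B$2$2 + B$2$1 * c0 - B$2$2 * c1"
    unfolding D_def m_def c2_def c1_def c0_def by (simp_all add: algebra_simps)
  then have "A = mat (m / D) ** B"
    using detB c_eq_0
    unfolding mat2_eq_iff scalar_mat_mult_nth D_def by (simp add: field_simps)
  then show ?thesis ..
qed

lemma stab_homogenize_scalar_root_of_unity:
  fixes p :: "complex poly"
  assumes p: "degree p = n" "lead_coeff p = 1"
    and A: "A \<in> stab_GL2 (\<lambda>v. homogenize n p (v$1) (v$2))"
    and B: "B \<in> stab_GL2 (\<lambda>v. homogenize n p (v$1) (v$2))"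
    and AB: "A = mat \<mu> ** B"
  shows "\<mu> ^ n = 1"
proof -
  have image_of_e1: "homogenize n p (M$1$1) (M$2$1) = 1"
    if "M \<in> stab_GL2 (\<lambda>v. homogenize n p (v$1) (v$2))" for M
  proof -
    have "homogenize n p (M$1$1 * 1 + M$1$2 * 0) (M$2$1 * 1 + M$2$2 * 0) = homogenize n p 1 0"
      using that unfolding stab_GL2_iff by blast
    then show ?thesis using p by (simp add: homogenize_at_y_0)
  qed
  have "1 = homogenize n p (\<mu> * B$1$1) (\<mu> * B$2$1)"
    using image_of_e1[OF A] by (simp add: AB scalar_mat_mult_nth)
  also have "\<dots> = \<mu> ^ n" by (simp add: homogenize_scale image_of_e1[OF B])
  finally show ?thesis ..
qed

lemma stab_homogenize_eq_scalar_mult: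
  fixes p :: "complex poly"
  assumes p: "degree p = n" "lead_coeff p = 1"
    and A: "A \<in> stab_GL2 (\<lambda>v. homogenize n p (v$1) (v$2))"
    and B: "B \<in> stab_GL2 (\<lambda>v. homogenize n p (v$1) (v$2))"
    and z: "distinct [z1, z2, z3]" "\<And>z. z \<in> {z1, z2, z3} \<Longrightarrow> poly p z = 0"
    and agree: "\<And>z. z \<in> {z1, z2, z3} \<Longrightarrow> moebius_map A z = moebius_map B z"
  shows "\<exists>\<mu>. \<mu> ^ n = 1 \<and> A = mat \<mu> ** B"
proof -
  have "(A$1$1 * z + A$1$2) * (B$2$1 * z + B$2$2) = (A$2$1 * z + A$2$2) * (B$1$1 * z + B$1$2)"
    if "z \<in> {z1, z2, z3}" for z
  proof -
    have "A$2$1 * z + A$2$2 \<noteq> 0" "B$2$1 * z + B$2$2 \<noteq> 0"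
      using stab_homogenize_maps_root(1)[OF p _ z(2)[OF that]] A B by blast+
    then show ?thesis using agree[OF that] by (simp add: moebius_map_def field_simps)
  qed
  moreover have "B$1$1 * B$2$2 - B$1$2 * B$2$1 \<noteq> 0"
    using B unfolding stab_GL2_iff by simp
  ultimately obtain \<mu> where "A = mat \<mu> ** B"
    using eq_scalar_mult_if_cross_eq[OF _ z(1)] by blast
  moreover have "\<mu> ^ n = 1"
    using stab_homogenize_scalar_root_of_unity[OF p A B] calculation .
  ultimately show ?thesis by blast
qed

lemma finite_stab_homogenize_if_three_roots:
  fixes p :: "complex poly"
  assumes p: "degree p = n" "lead_coeff p = 1"
    and z: "distinct [z1, z2, z3]" "\<And>z. z \<in> {z1, z2, z3} \<Longrightarrow> poly p z = 0"
  shows "finite (stab_GL2 (\<lambda>v. homogenize n p (v$1) (v$2)))"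
proof -
  define S where "S = stab_GL2 (\<lambda>v. homogenize n p (v$1) (v$2))"
  define Z where "Z = {z. poly p z = 0}"
  define action where "action A = restrict (moebius_map A) Z" for A
  have "p \<noteq> 0" using p by auto
  then have "finite Z" unfolding Z_def by (rule poly_roots_finite)
  have "n \<noteq> 0"
  proof
    assume "n = 0"
    then have "p = 1" using p by (metis coeff_pCons_0 degree_0_id one_pCons)
    then show False using z(2)[of z1] by simp
  qed
  have "S = action -` (Z \<rightarrow>\<^sub>E Z) \<inter> S"
    using stab_homogenize_maps_root(2)[OF p] unfolding S_def Z_def action_def by auto
  also have "finite \<dots>"
  proof (rule finite_finite_vimage_IntI)
    show "finite (Z \<rightarrow>\<^sub>E Z)" using \<open>finite Z\<close> by (intro finite_PiE)
  next
    fix \<psi>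
    show "finite (action -` {\<psi>} \<inter> S)"
    proof (cases "action -` {\<psi>} \<inter> S = {}")
      case False
      then obtain B where B: "B \<in> S" "action B = \<psi>" by auto
      have "action -` {\<psi>} \<inter> S \<subseteq> (\<lambda>\<mu>. mat \<mu> ** B) ` {\<mu>. \<mu> ^ n = 1}"
      proof
        fix A assume "A \<in> action -` {\<psi>} \<inter> S"
        then have A: "A \<in> S" "action A = action B" using B by auto
        have "moebius_map A z = moebius_map B z" if "z \<in> {z1, z2, z3}" for z
          using fun_cong[OF A(2), of z] z(2)[OF that] unfolding action_def Z_def by simp
        with A(1) show "A \<in> (\<lambda>\<mu>. mat \<mu> ** B) ` {\<mu>. \<mu> ^ n = 1}"
          using stab_homogenize_eq_scalar_mult[OF p _ _ z] B(1) unfolding S_def by blast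
      qed
      moreover have "finite {\<mu>::complex. \<mu> ^ n = 1}"
        using \<open>n \<noteq> 0\<close> by (intro finite_roots_unity) simp
      ultimately show ?thesis by (meson finite_imageI finite_subset)
    qed simp
  qed
  finally show ?thesis unfolding S_def .
qed

lemma infinite_torus_solutions:
  "infinite {(t::complex, s). t \<noteq> 0 \<and> s \<noteq> 0 \<and> t ^ a * s ^ b = 1}"
proof (cases "b = 0")
  case True
  have "inj (\<lambda>k. (1::complex, of_nat (Suc k) :: complex))" by (auto intro: injI)
  moreover have "range (\<lambda>k. (1::complex, of_nat (Suc k) :: complex)) \<subseteq>
      {(t, s). t \<noteq> 0 \<and> s \<noteq> 0 \<and> t ^ a * s ^ b = 1}"
    using True by (auto simp del: of_nat_Suc)
  ultimately show ?thesis by (meson infinite_super range_inj_infinite)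
next
  case False
  define f :: "nat \<Rightarrow> complex \<times> complex"
    where "f k = (of_nat (Suc k ^ b), 1 / of_nat (Suc k ^ a))" for k
  have "inj f"
    using False by (auto intro!: injI simp: f_def power_eq_iff_eq_base simp del: of_nat_power)
  moreover have "range f \<subseteq> {(t, s). t \<noteq> 0 \<and> s \<noteq> 0 \<and> t ^ a * s ^ b = 1}"
    by (auto simp: f_def power_divide simp del: of_nat_power)
       (simp add: mult.commute flip: power_mult of_nat_power)
  ultimately show ?thesis by (meson infinite_super range_inj_infinite)
qed

text \<open>The matrix of the linear map multiplying the linear form x - z1 y by t and the
  linear form x - z2 y by s.\<close>
definition torus_mat :: "complex \<Rightarrow> complex \<Rightarrow> complex \<Rightarrow> complex \<Rightarrow> complex^2^2" where
  "torus_mat z1 z2 t s =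
     mat2 ((t * z2 - s * z1) / (z2 - z1)) ((s - t) * z1 * z2 / (z2 - z1))
          ((t - s) / (z2 - z1)) ((s * z2 - t * z1) / (z2 - z1))"

lemma
  fixes t s x y :: complex
  assumes "z1 \<noteq> z2"
  defines "M \<equiv> torus_mat z1 z2 t s"
  shows torus_mat_form1: "(M$1$1 * x + M$1$2 * y) - z1 * (M$2$1 * x + M$2$2 * y) = t * (x - z1 * y)"
    and torus_mat_form2: "(M$1$1 * x + M$1$2 * y) - z2 * (M$2$1 * x + M$2$2 * y) = s * (x - z2 * y)"
    and torus_mat_det: "M$1$1 * M$2$2 - M$1$2 * M$2$1 = t * s"
    and torus_mat_at_z2: "M$2$1 * z2 + M$2$2 = t"
    and torus_mat_at_z1: "M$2$1 * z1 + M$2$2 = s"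
proof -
  have u: "inverse (z2 - z1) * (z2 - z1) = 1" using assms by simp
  show "(M$1$1 * x + M$1$2 * y) - z1 * (M$2$1 * x + M$2$2 * y) = t * (x - z1 * y)"
       "(M$1$1 * x + M$1$2 * y) - z2 * (M$2$1 * x + M$2$2 * y) = s * (x - z2 * y)"
       "M$1$1 * M$2$2 - M$1$2 * M$2$1 = t * s"
       "M$2$1 * z2 + M$2$2 = t" "M$2$1 * z1 + M$2$2 = s"
    using u unfolding M_def torus_mat_def mat2_nth divide_inverse by algebra+
qed

lemma inj_torus_mat:
  assumes "z1 \<noteq> z2" shows "inj (\<lambda>(t, s). torus_mat z1 z2 t s)"
proof (rule injI, clarify)
  fix t s t' s' assume "torus_mat z1 z2 t s = torus_mat z1 z2 t' s'"
  then show "t = t' \<and> s = s'"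
    using torus_mat_at_z1[OF assms] torus_mat_at_z2[OF assms] by metis
qed

lemma infinite_stab_homogenize_if_two_roots:
  fixes p :: "complex poly"
  assumes p: "degree p = n" "lead_coeff p = 1"
    and roots: "{z. poly p z = 0} \<subseteq> {z1, z2}" and z: "z1 \<noteq> z2"
  shows "infinite (stab_GL2 (\<lambda>v. homogenize n p (v$1) (v$2)))"
proof -
  define a b where "a = order z1 p" and "b = order z2 p"
  define T where "T = {(t::complex, s). t \<noteq> 0 \<and> s \<noteq> 0 \<and> t ^ a * s ^ b = 1}"
  have form: "homogenize n p x y = (x - z1 * y) ^ a * (x - z2 * y) ^ b" for x y
    using homogenize_two_root_powers[OF p roots z] unfolding a_def b_def .
  have "(\<lambda>(t, s). torus_mat z1 z2 t s) ` T \<subseteq> stab_GL2 (\<lambda>v. homogenize n p (v$1) (v$2))"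
  proof clarify
    fix t s assume "(t, s) \<in> T"
    then have ts: "t \<noteq> 0" "s \<noteq> 0" "t ^ a * s ^ b = 1" unfolding T_def by auto
    have "(t * u) ^ a * (s * w) ^ b = (t ^ a * s ^ b) * (u ^ a * w ^ b)" for u w :: complex
      by (simp add: power_mult_distrib mult_ac)
    then have scale: "(t * u) ^ a * (s * w) ^ b = u ^ a * w ^ b" for u w :: complex
      using ts(3) by simp
    then show "torus_mat z1 z2 t s \<in> stab_GL2 (\<lambda>v. homogenize n p (v$1) (v$2))"
      unfolding stab_GL2_iff unfolding form torus_mat_form1[OF z] torus_mat_form2[OF z] torus_mat_det[OF z]
      using ts scale by simp
  qed
  moreover have "infinite ((\<lambda>(t, s). torus_mat z1 z2 t s) ` T)"
    using inj_torus_mat[OF z] infinite_torus_solutions[of a b] unfolding T_def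
    by (meson finite_imageD inj_on_subset subset_UNIV)
  ultimately show ?thesis by (rule infinite_super)
qed

lemma subset_two_distinct_if_card_less_3:
  assumes "infinite (UNIV :: 'a set)" "finite (Z :: 'a set)" "card Z < 3"
  obtains z1 z2 where "z1 \<noteq> z2" "Z \<subseteq> {z1, z2}"
proof (cases "card Z = 2")
  case True
  then show ?thesis using that by (auto simp: card_2_iff)
next
  case False
  then have "card Z \<le> Suc 0" using assms(3) by simp
  then obtain z1 where "Z \<subseteq> {z1}"
  proof (cases "Z = {}")
    case False
    then obtain z where "z \<in> Z" by blast
    then have "Z \<subseteq> {z}"
      using card_le_Suc0_iff_eq[OF assms(2)] \<open>card Z \<le> Suc 0\<close> by blast
    then show ?thesis by (rule that)
  qed (use that in blast)
  moreover obtain z2 where "z2 \<notin> {z1}"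
    using ex_new_if_finite[OF assms(1)] by blast
  ultimately show ?thesis using that by blast
qed

theorem finite_stab_homogenize_iff:
  fixes p :: "complex poly"
  assumes p: "degree p = n" "lead_coeff p = 1"
  shows "finite (stab_GL2 (\<lambda>v. homogenize n p (v$1) (v$2))) \<longleftrightarrow> 3 \<le> card {z. poly p z = 0}"
proof
  assume finite_stab: "finite (stab_GL2 (\<lambda>v. homogenize n p (v$1) (v$2)))"
  show "3 \<le> card {z. poly p z = 0}"
  proof (rule ccontr)
    assume "\<not> 3 \<le> card {z. poly p z = 0}"
    moreover have "finite {z. poly p z = 0}" using p by (intro poly_roots_finite) auto
    ultimately obtain z1 z2 where "z1 \<noteq> z2" "{z. poly p z = 0} \<subseteq> {z1, z2}"
      using subset_two_distinct_if_card_less_3[OF infinite_UNIV_char_0] by (meson not_le)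
    then show False
      using infinite_stab_homogenize_if_two_roots[OF p] finite_stab by blast
  qed
next
  assume "3 \<le> card {z. poly p z = 0}"
  then obtain Z where "Z \<subseteq> {z. poly p z = 0}" "card Z = 3"
    by (meson obtain_subset_with_card_n)
  then obtain z1 z2 z3 where "distinct [z1, z2, z3]" "\<And>z. z \<in> {z1, z2, z3} \<Longrightarrow> poly p z = 0"
    unfolding card_3_iff by auto
  then show "finite (stab_GL2 (\<lambda>v. homogenize n p (v$1) (v$2)))"
    by (rule finite_stab_homogenize_if_three_roots[OF p])
qed

section \<open>Weight enumerators of linear codes\<close>

lemma linear_code_finite:
  fixes C :: "(nat \<Rightarrow> 'a::{field,finite}) set"
  assumes "is_linear_code n C" shows "finite C"
proof -
  have "C \<subseteq> {v. \<forall>i\<ge>n. v i = 0}" using assms unfolding is_linear_code_def by blast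
  also have "\<dots> \<subseteq> (\<lambda>v i. if i < n then v i else 0) ` ({..<n} \<rightarrow>\<^sub>E UNIV)"
  proof
    fix v :: "nat \<Rightarrow> 'a" assume "v \<in> {v. \<forall>i\<ge>n. v i = 0}"
    then have "v = (\<lambda>i. if i < n then restrict v {..<n} i else 0)" by (auto simp: fun_eq_iff)
    moreover have "restrict v {..<n} \<in> {..<n} \<rightarrow>\<^sub>E UNIV" by simp
    ultimately show "v \<in> (\<lambda>v i. if i < n then v i else 0) ` ({..<n} \<rightarrow>\<^sub>E UNIV)"
      by (rule image_eqI)
  qed
  finally show ?thesis
    by (rule finite_subset) (intro finite_imageI finite_PiE; simp)
qed

lemma wt_le: "wt n c \<le> n"
  unfolding wt_def using card_mono[of "{..<n}" "{i\<in>{..<n}. c i \<noteq> 0}"] by auto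

lemma wt_eq_0_iff:
  assumes "is_linear_code n C" "c \<in> C" shows "wt n c = 0 \<longleftrightarrow> c = (\<lambda>_. 0)"
proof -
  have "\<forall>i\<ge>n. c i = 0" using assms unfolding is_linear_code_def by blast
  then show ?thesis unfolding wt_def by (auto simp: fun_eq_iff) (metis not_less)
qed

lemma wenum1_of_int:
  "(map_poly of_int (wenum1 n C) :: 'b::ring_1 poly) = (\<Sum>c\<in>C. monom 1 (n - wt n c))"
  unfolding wenum1_def
  by (rule poly_eqI) (simp add: coeff_map_poly coeff_sum coeff_monom of_int_sum if_distrib cong: if_cong)

lemma wenum1_monic:
  fixes C :: "(nat \<Rightarrow> 'a::{field,finite}) set"
  assumes C: "is_linear_code n C"
  defines "W \<equiv> map_poly of_int (wenum1 n C) :: complex poly"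
  shows "degree W = n" "lead_coeff W = 1"
proof -
  have coeff_W: "coeff W k = (\<Sum>c\<in>C. if n - wt n c = k then 1 else 0)" for k
    unfolding W_def wenum1_of_int by (simp add: coeff_sum coeff_monom)
  have "n - wt n c = n \<longleftrightarrow> c = (\<lambda>_. 0)" if "c \<in> C" for c
    using wt_le[of n c] wt_eq_0_iff[OF C that] by auto
  then have "coeff W n = (\<Sum>c\<in>C. if c = (\<lambda>_. 0) then 1 else 0)"
    unfolding coeff_W by (intro sum.cong) auto
  also have "\<dots> = 1"
    using linear_code_finite[OF C] C unfolding is_linear_code_def by simp
  finally have "coeff W n = 1" .
  moreover have "coeff W k = 0" if "k > n" for k
    unfolding coeff_W using that by (intro sum.neutral) auto
  ultimately have "degree W = n"
    by (intro antisym degree_le le_degree) auto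
  then show "degree W = n" "lead_coeff W = 1" using \<open>coeff W n = 1\<close> by simp_all
qed

lemma wenum2_eq_homogenize:
  "wenum2 n C = (\<lambda>v. homogenize n (map_poly of_int (wenum1 n C)) (v$1) (v$2))"
proof
  fix v :: "complex^2"
  show "wenum2 n C v = homogenize n (map_poly of_int (wenum1 n C)) (v$1) (v$2)"
    unfolding wenum2_def wenum1_of_int homogenize_sum
    by (intro sum.cong) (simp_all add: homogenize_monom diff_diff_cancel[OF wt_le])
qed

theorem theorem4p2:
  fixes C :: "(nat \<Rightarrow> 'a::{field,finite}) set" and n :: nat
  assumes "is_linear_code n C"
  shows "finite (stab_GL2 (wenum2 n C)) \<longleftrightarrow>
         card {z::complex. poly (map_poly of_int (wenum1 n C)) z = 0} \<ge> 3"
  unfolding wenum2_eq_homogenize using finite_stab_homogenize_iff[OF wenum1_monic[OF assms]] .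

end
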